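(* Let $P=(Q,I,M,\Delta)$ be a broadcast protocol and $S$ the set returned by the saturation algorithm on $P$. Then $S$ is exactly the set of states $q$ for which there exists a lossy execution covering $\{q\}$. In particular, for every $F\subseteq Q$, there exists a lossy execution covering $F$ if and only if $F\cap S\neq\emptyset$.
   Context: A broadcast protocol is a tuple $P=(Q,I,M,\Delta)$ where $Q$ is a finite set of states, $I\subseteq Q$ initial states, $M$ a finite message alphabet and $\Delta\subseteq Q\times\{!!m,\ ??m \mid m\in M\}\times Q$ ($!!m$ = broadcast, $??m$ = reception). Protocols are complete for receptions: for every $q$, $m$ there is $q'$ with $(q,??m,q')\in\Delta$. A configuration is a finite undirected graph $\gamma=(V,E,L)$, $E$ symmetric irreflexive, $L:V\to Q$; $L(\gamma)=L(V)$; $\gamma$ is initial if $L(V)\subseteq I$. A lossy step goes from $\gamma=(V,E,L)$ to $\gamma'=(V,E,L')$ (same nodes and edges) if there exist a node $v$ and $m\in M$ with $(L(v),!!m,L'(v))\in\Delta$ and either (a) $L'(v')=L(v')$ for all $v'\neq v$ (the broadcast is lost), or (b) for every $v'\neq v$: if $v'$ is a neighbour of $v$ then $(L(v'),??m,L'(v'))\in\Delta$, otherwise $L'(v')=L(v')$ (successful broadcast). A lossy execution is a sequence $\gamma_0,\dots,\gamma_r$ with $\gamma_0$ initial and consecutive lossy steps; it covers $F$ if $L(\gamma_r)\cap F\neq\emptyset$. The saturation algorithm: start with $S:=I$, $c:=|I|$; repeat: if there is $(q_1,!!m,q_2)\in\Delta$ with $q_1\in S$, $q_2\notin S$, add $q_2$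 to $S$ and $c:=c+1$; else if there are $(q_1,!!m,q_2),(q_1',??m,q_2')\in\Delta$ with $q_1,q_2,q_1'\in S$, $q_2'\notin S$, add $q_2'$ and $c:=c+2$; else stop and return $S$. *)

theory Defs
  imports Main
begin

datatype 'm action = Bcast 'm | Recv 'm

definition broadcast_protocol ::
  "'q set \<Rightarrow> 'q set \<Rightarrow> 'm set \<Rightarrow> ('q \<times> 'm action \<times> 'q) set \<Rightarrow> bool" where
  "broadcast_protocol Q I M Delta \<longleftrightarrow>
     finite Q \<and> finite M \<and> I \<subseteq> Q \<and>
     (\<forall>(q, a, q') \<in> Delta. q \<in> Q \<and> q' \<in> Q \<and>
        (\<exists>m\<in>M. a = Bcast m \<or> a = Recv m)) \<and>
     (\<forall>q\<in>Q. \<forall>m\<in>M. \<exists>q'. (q, Recv m, q') \<in> Delta)"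

definition graph_ok :: "nat set \<Rightarrow> (nat \<times> nat) set \<Rightarrow> bool" where
  "graph_ok V E \<longleftrightarrow> finite V \<and> E \<subseteq> V \<times> V \<and> sym E \<and> (\<forall>v. (v, v) \<notin> E)"

definition lossy_step ::
  "('q \<times> 'm action \<times> 'q) set \<Rightarrow> nat set \<Rightarrow> (nat \<times> nat) set \<Rightarrow>
   (nat \<Rightarrow> 'q) \<Rightarrow> (nat \<Rightarrow> 'q) \<Rightarrow> bool" where
  "lossy_step Delta V E L L' \<longleftrightarrow>
     (\<exists>v\<in>V. \<exists>m. (L v, Bcast m, L' v) \<in> Delta \<and>
        ((\<forall>v'. v' \<noteq> v \<longrightarrow> L' v' = L v') \<or>
         (\<forall>v'. v' \<noteq> v \<longrightarrow>
            ((v, v') \<in> E \<longrightarrow> (L v', Recv m, L' v') \<in> Delta) \<and>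
            ((v, v') \<notin> E \<longrightarrow> L' v' = L v'))))"

definition lossy_execution_covering ::
  "'q set \<Rightarrow> ('q \<times> 'm action \<times> 'q) set \<Rightarrow> nat set \<Rightarrow> (nat \<times> nat) set \<Rightarrow>
   (nat \<Rightarrow> 'q) list \<Rightarrow> 'q set \<Rightarrow> bool" where
  "lossy_execution_covering I Delta V E Ls F \<longleftrightarrow>
     graph_ok V E \<and> Ls \<noteq> [] \<and>
     (\<forall>v\<in>V. hd Ls v \<in> I) \<and>
     (\<forall>i. Suc i < length Ls \<longrightarrow> lossy_step Delta V E (Ls ! i) (Ls ! Suc i)) \<and>
     (\<exists>v\<in>V. last Ls v \<in> F)"

definition coverable ::
  "'q set \<Rightarrow> ('q \<times> 'm action \<times> 'q) set \<Rightarrow> 'q set \<Rightarrow> bool" where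
  "coverable I Delta F \<longleftrightarrow> (\<exists>V E Ls. lossy_execution_covering I Delta V E Ls F)"

definition sat_step ::
  "('q \<times> 'm action \<times> 'q) set \<Rightarrow> 'q set \<times> nat \<Rightarrow> 'q set \<times> nat \<Rightarrow> bool" where
  "sat_step Delta Sc Sc' \<longleftrightarrow>
     (let (S, c) = Sc in
       (\<exists>q1 m q2. (q1, Bcast m, q2) \<in> Delta \<and> q1 \<in> S \<and> q2 \<notin> S \<and>
          Sc' = (insert q2 S, c + 1)) \<or>
       ((\<not> (\<exists>q1 m q2. (q1, Bcast m, q2) \<in> Delta \<and> q1 \<in> S \<and> q2 \<notin> S)) \<and>
        (\<exists>q1 m q2 q1' q2'. (q1, Bcast m, q2) \<in> Delta \<and> (q1', Recv m, q2') \<in> Delta \<and>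
          q1 \<in> S \<and> q2 \<in> S \<and> q1' \<in> S \<and> q2' \<notin> S \<and>
          Sc' = (insert q2' S, c + 2))))"

definition saturation_result ::
  "'q set \<Rightarrow> ('q \<times> 'm action \<times> 'q) set \<Rightarrow> 'q set \<Rightarrow> bool" where
  "saturation_result I Delta S \<longleftrightarrow>
     (\<exists>c. (sat_step Delta)\<^sup>*\<^sup>* (I, card I) (S, c) \<and> \<not> (\<exists>Sc'. sat_step Delta (S, c) Sc'))"

end

theory Submission
  imports Defs
begin

(* The saturation computes the least set R of states that contains the initial states and is
   closed under broadcast targets and under targets of receptions of a message broadcast from a
   state of R by a receiver whose state is in R: the algorithm only ever adds such states and
   stops only once R is closed.  Every step of a lossy execution fires exactly such transitions,
   so all labels stay in R.  Conversely, each q in R labels the root of an execution in which the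
   root never broadcasts successfully.  For the reception rule, run the two executions witnessing
   the broadcaster and the receiver side by side with an extra edge between their roots; as roots
   only broadcast lossily, the replay never uses that edge.  Then the first root broadcasts m, the
   second root receives it, and the remaining neighbours take any reception, which exists because
   the protocol is complete for receptions. *)

lemma rtranclp_iff_chain:
  "R\<^sup>*\<^sup>* a b \<longleftrightarrow>
   (\<exists>xs. xs \<noteq> [] \<and> hd xs = a \<and> last xs = b \<and>
      (\<forall>i. Suc i < length xs \<longrightarrow> R (xs ! i) (xs ! Suc i)))"
proof
  assume "R\<^sup>*\<^sup>* a b"
  then obtain n f where "f 0 = a" "f n = b" "\<forall>i<n. R (f i) (f (Suc i))"
    by (auto simp: rtranclp_power relpowp_fun_conv)
  then show "\<exists>xs. xs \<noteq> [] \<and> hd xs = a \<and> last xs = b \<and>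
      (\<forall>i. Suc i < length xs \<longrightarrow> R (xs ! i) (xs ! Suc i))"
    by (intro exI[of _ "map f [0..<Suc n]"]) (auto simp: hd_map last_map simp del: upt_Suc)
next
  assume "\<exists>xs. xs \<noteq> [] \<and> hd xs = a \<and> last xs = b \<and>
      (\<forall>i. Suc i < length xs \<longrightarrow> R (xs ! i) (xs ! Suc i))"
  then obtain xs where "xs \<noteq> []" "hd xs = a" "last xs = b"
    "\<forall>i. Suc i < length xs \<longrightarrow> R (xs ! i) (xs ! Suc i)" by blast
  then have "(R ^^ (length xs - 1)) a b"
    unfolding relpowp_fun_conv
    by (intro exI[of _ "(!) xs"]) (auto simp: hd_conv_nth last_conv_nth)
  then show "R\<^sup>*\<^sup>* a b" by (auto simp: rtranclp_power)
qed

lemma coverable_iff_rtranclp: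
  "coverable I Delta F \<longleftrightarrow>
   (\<exists>V E L0 L. graph_ok V E \<and> (\<forall>v\<in>V. L0 v \<in> I) \<and> (lossy_step Delta V E)\<^sup>*\<^sup>* L0 L \<and>
      (\<exists>v\<in>V. L v \<in> F))"
  unfolding coverable_def lossy_execution_covering_def rtranclp_iff_chain by blast

lemma coverable_mono: "coverable I Delta F \<Longrightarrow> F \<subseteq> G \<Longrightarrow> coverable I Delta G"
  unfolding coverable_def lossy_execution_covering_def by blast

inductive_set saturation :: "'q set \<Rightarrow> ('q \<times> 'm action \<times> 'q) set \<Rightarrow> 'q set"
  for I :: "'q set" and Delta :: "('q \<times> 'm action \<times> 'q) set" where
  initial: "q \<in> I \<Longrightarrow> q \<in> saturation I Delta"
| broadcast: "q1 \<in> saturation I Delta \<Longrightarrow> (q1, Bcast m, q2) \<in> Delta \<Longrightarrow> q2 \<in> saturation I Delta"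
| reception: "q1 \<in> saturation I Delta \<Longrightarrow> q1' \<in> saturation I Delta \<Longrightarrow> (q1, Bcast m, q2) \<in> Delta \<Longrightarrow>
    (q1', Recv m, q2') \<in> Delta \<Longrightarrow> q2' \<in> saturation I Delta"

lemma saturation_subset:
  assumes "broadcast_protocol Q I M Delta"
  shows "saturation I Delta \<subseteq> Q"
proof
  fix q assume "q \<in> saturation I Delta"
  then show "q \<in> Q"
    by induction (use assms in \<open>auto simp: broadcast_protocol_def\<close>)
qed

lemma sat_steps_between:
  assumes "(sat_step Delta)\<^sup>*\<^sup>* (I, card I) (S, c)"
  shows "I \<subseteq> S \<and> S \<subseteq> saturation I Delta"
  using assms
proof (induction "(S, c)" arbitrary: S c rule: rtranclp_induct)
  case base
  then show ?case by (auto intro: saturation.initial)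
next
  case (step Sc)
  then show ?case
    by (cases Sc) (auto simp: sat_step_def intro: saturation.intros)
qed

lemma saturation_subset_stuck:
  assumes stuck: "\<not> (\<exists>Sc'. sat_step Delta (S, c) Sc')" and "I \<subseteq> S"
  shows "saturation I Delta \<subseteq> S"
proof -
  have bcast: "q2 \<in> S" if "(q1, Bcast m, q2) \<in> Delta" "q1 \<in> S" for q1 m q2
  proof (rule ccontr)
    assume "q2 \<notin> S"
    then have "sat_step Delta (S, c) (insert q2 S, c + 1)"
      using that unfolding sat_step_def by auto
    with stuck show False by blast
  qed
  have recv: "q2' \<in> S"
    if "(q1, Bcast m, q2) \<in> Delta" "(q1', Recv m, q2') \<in> Delta" "q1 \<in> S" "q1' \<in> S"
    for q1 m q2 q1' q2'
  proof (rule ccontr)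
    assume "q2' \<notin> S"
    then have "sat_step Delta (S, c) (insert q2' S, c + 2)"
      using that bcast[OF that(1,3)] bcast unfolding sat_step_def by (simp add: Let_def) blast
    with stuck show False by blast
  qed
  show ?thesis
  proof
    fix q assume "q \<in> saturation I Delta"
    then show "q \<in> S"
    proof induction
      case (initial q)
      then show ?case using \<open>I \<subseteq> S\<close> by blast
    next
      case (broadcast q1 m q2)
      then show ?case using bcast by blast
    next
      case (reception q1 q1' m q2 q2')
      then show ?case using recv by blast
    qed
  qed
qed

lemma saturation_result_eq:
  assumes "saturation_result I Delta S"
  shows "S = saturation I Delta"
proof -
  obtain c where run: "(sat_step Delta)\<^sup>*\<^sup>* (I, card I) (S, c)"
    and stuck: "\<not> (\<exists>Sc'. sat_step Delta (S, c) Sc')"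
    using assms unfolding saturation_result_def by blast
  show ?thesis
    using sat_steps_between[OF run] saturation_subset_stuck[OF stuck] by blast
qed

lemma lossy_step_preserves_saturation:
  assumes "lossy_step Delta V E L N" and sat: "\<forall>v\<in>V. L v \<in> saturation I Delta"
  shows "\<forall>v\<in>V. N v \<in> saturation I Delta"
proof
  fix x assume "x \<in> V"
  obtain v m where "v \<in> V" and bc: "(L v, Bcast m, N v) \<in> Delta"
    and rest: "(\<forall>v'. v' \<noteq> v \<longrightarrow> N v' = L v') \<or>
      (\<forall>v'. v' \<noteq> v \<longrightarrow> ((v, v') \<in> E \<longrightarrow> (L v', Recv m, N v') \<in> Delta) \<and>
                         ((v, v') \<notin> E \<longrightarrow> N v' = L v'))"
    using assms(1) unfolding lossy_step_def by blast
  have Lv: "L v \<in> saturation I Delta" and Lx: "L x \<in> saturation I Delta"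
    using sat \<open>v \<in> V\<close> \<open>x \<in> V\<close> by auto
  consider "x = v" | "x \<noteq> v" "(v, x) \<in> E" "N x \<noteq> L x" | "N x = L x"
    using rest by blast
  then show "N x \<in> saturation I Delta"
  proof cases
    case 1
    then show ?thesis using saturation.broadcast[OF Lv bc] by simp
  next
    case 2
    then show ?thesis using rest saturation.reception[OF Lv Lx bc] by blast
  next
    case 3
    then show ?thesis using Lx by simp
  qed
qed

lemma lossy_steps_preserve_saturation:
  "(lossy_step Delta V E)\<^sup>*\<^sup>* L N \<Longrightarrow> \<forall>v\<in>V. L v \<in> saturation I Delta \<Longrightarrow>
   \<forall>v\<in>V. N v \<in> saturation I Delta"
proof (induction rule: rtranclp_induct)
  case (step L' N')
  then show ?case using lossy_step_preserves_saturation[OF step.hyps(2)] by blast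
qed

lemma coverable_saturation:
  assumes "coverable I Delta F"
  shows "F \<inter> saturation I Delta \<noteq> {}"
proof -
  obtain V E L0 L v where init: "\<forall>v\<in>V. L0 v \<in> I"
    and run: "(lossy_step Delta V E)\<^sup>*\<^sup>* L0 L" and "v \<in> V" "L v \<in> F"
    using assms unfolding coverable_iff_rtranclp by blast
  have "\<forall>v\<in>V. L0 v \<in> saturation I Delta"
    using init by (simp add: saturation.initial)
  with run have "\<forall>v\<in>V. L v \<in> saturation I Delta"
    by (rule lossy_steps_preserve_saturation)
  then show ?thesis using \<open>v \<in> V\<close> \<open>L v \<in> F\<close> by blast
qed

definition rooted_step ::
  "('q \<times> 'm action \<times> 'q) set \<Rightarrow> nat set \<Rightarrow> (nat \<times> nat) set \<Rightarrow> nat \<Rightarrow>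
   (nat \<Rightarrow> 'q) \<Rightarrow> (nat \<Rightarrow> 'q) \<Rightarrow> bool" where
  "rooted_step Delta V E r L N \<longleftrightarrow>
     (\<exists>v\<in>V. \<exists>m. (L v, Bcast m, N v) \<in> Delta \<and>
        ((\<forall>x. x \<noteq> v \<longrightarrow> N x = L x) \<or>
         (v \<noteq> r \<and> (\<forall>x. x \<noteq> v \<longrightarrow>
            ((v, x) \<in> E \<longrightarrow> (L x, Recv m, N x) \<in> Delta) \<and>
            ((v, x) \<notin> E \<longrightarrow> N x = L x)))))"

lemma rooted_step_lossy_step: "rooted_step Delta V E r \<le> lossy_step Delta V E"
  unfolding rooted_step_def lossy_step_def by blast

definition rooted_reachable ::
  "'q set \<Rightarrow> ('q \<times> 'm action \<times> 'q) set \<Rightarrow> nat set \<Rightarrow> (nat \<times> nat) set \<Rightarrow> nat \<Rightarrow>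
   (nat \<Rightarrow> 'q) \<Rightarrow> bool" where
  "rooted_reachable I Delta V E r L \<longleftrightarrow> graph_ok V E \<and> r \<in> V \<and>
     (\<exists>L0. (\<forall>v\<in>V. L0 v \<in> I) \<and> (rooted_step Delta V E r)\<^sup>*\<^sup>* L0 L)"

lemma rooted_reachable_lossy:
  assumes "rooted_reachable I Delta V E r L"
  obtains L0 where "graph_ok V E" "r \<in> V" "\<forall>v\<in>V. L0 v \<in> I" "(lossy_step Delta V E)\<^sup>*\<^sup>* L0 L"
  using assms rtranclp_mono[OF rooted_step_lossy_step]
  unfolding rooted_reachable_def by blast

lemma rooted_reachable_coverable: "rooted_reachable I Delta V E r L \<Longrightarrow> coverable I Delta {L r}"
  unfolding coverable_iff_rtranclp by (elim rooted_reachable_lossy) blast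

lemma rooted_reachable_saturation:
  assumes "rooted_reachable I Delta V E r L"
  shows "\<forall>v\<in>V. L v \<in> saturation I Delta"
proof -
  obtain L0 where init: "\<forall>v\<in>V. L0 v \<in> I" and run: "(lossy_step Delta V E)\<^sup>*\<^sup>* L0 L"
    using assms by (rule rooted_reachable_lossy)
  have "\<forall>v\<in>V. L0 v \<in> saturation I Delta"
    using init by (simp add: saturation.initial)
  with run show ?thesis by (rule lossy_steps_preserve_saturation)
qed

(* Neighbourhoods are only preserved at non-root nodes: the root never broadcasts successfully,
   which leaves room for the extra edge at the root. *)
lemma rooted_step_embed:
  assumes step: "rooted_step Delta V E r L N"
    and "inj h" and "h ` V \<subseteq> V'"
    and adj: "\<And>v x. v \<in> V \<Longrightarrow> v \<noteq> r \<Longrightarrow> (h v, x) \<in> E' \<longleftrightarrow> (\<exists>w. x = h w \<and> (v, w) \<in> E)"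
    and root: "\<And>v. v \<in> V \<Longrightarrow> h v = r' \<Longrightarrow> v = r"
    and lab: "\<And>L v. F L (h v) = L v"
    and frame: "\<And>L N x. x \<notin> range h \<Longrightarrow> F L x = F N x"
  shows "rooted_step Delta V' E' r' (F L) (F N)"
proof -
  obtain v m where "v \<in> V" and bc: "(L v, Bcast m, N v) \<in> Delta"
    and rest: "(\<forall>x. x \<noteq> v \<longrightarrow> N x = L x) \<or>
      (v \<noteq> r \<and> (\<forall>x. x \<noteq> v \<longrightarrow> ((v, x) \<in> E \<longrightarrow> (L x, Recv m, N x) \<in> Delta) \<and>
                                  ((v, x) \<notin> E \<longrightarrow> N x = L x)))"
    using step unfolding rooted_step_def by blast
  have unchanged: "F N x = F L x" if "\<And>w. x = h w \<Longrightarrow> N w = L w" for x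
    using that lab frame by (cases "x \<in> range h") auto
  have other: "w \<noteq> v" if "x \<noteq> h v" "x = h w" for x w
    using that by blast
  show ?thesis
    unfolding rooted_step_def
  proof (intro bexI[of _ "h v"] exI[of _ m] conjI)
    show "(F L (h v), Bcast m, F N (h v)) \<in> Delta" using bc by (simp add: lab)
    show "h v \<in> V'" using \<open>v \<in> V\<close> assms(3) by blast
    show "(\<forall>x. x \<noteq> h v \<longrightarrow> F N x = F L x) \<or>
      (h v \<noteq> r' \<and> (\<forall>x. x \<noteq> h v \<longrightarrow>
         ((h v, x) \<in> E' \<longrightarrow> (F L x, Recv m, F N x) \<in> Delta) \<and>
         ((h v, x) \<notin> E' \<longrightarrow> F N x = F L x)))"
      using rest
    proof
      assume "\<forall>x. x \<noteq> v \<longrightarrow> N x = L x"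
      then show ?thesis using unchanged other by blast
    next
      assume succ: "v \<noteq> r \<and> (\<forall>x. x \<noteq> v \<longrightarrow> ((v, x) \<in> E \<longrightarrow> (L x, Recv m, N x) \<in> Delta) \<and>
                                  ((v, x) \<notin> E \<longrightarrow> N x = L x))"
      then have "h v \<noteq> r'" using root \<open>v \<in> V\<close> by blast
      moreover have "(F L x, Recv m, F N x) \<in> Delta" if "x \<noteq> h v" "(h v, x) \<in> E'" for x
        using that succ adj[OF \<open>v \<in> V\<close>] other lab by force
      moreover have "F N x = F L x" if "x \<noteq> h v" "(h v, x) \<notin> E'" for x
        using that succ adj[OF \<open>v \<in> V\<close>] other by (intro unchanged) blast
      ultimately show ?thesis by blast
    qed
  qed
qed

lemma rooted_steps_embed:
  assumes "(rooted_step Delta V E r)\<^sup>*\<^sup>* L N"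
    and "inj h" and "h ` V \<subseteq> V'"
    and "\<And>v x. v \<in> V \<Longrightarrow> v \<noteq> r \<Longrightarrow> (h v, x) \<in> E' \<longleftrightarrow> (\<exists>w. x = h w \<and> (v, w) \<in> E)"
    and "\<And>v. v \<in> V \<Longrightarrow> h v = r' \<Longrightarrow> v = r"
    and "\<And>L v. F L (h v) = L v"
    and "\<And>L N x. x \<notin> range h \<Longrightarrow> F L x = F N x"
  shows "(rooted_step Delta V' E' r')\<^sup>*\<^sup>* (F L) (F N)"
  using assms(1)
proof (induction rule: rtranclp_induct)
  case (step N N')
  then show ?case
    using rooted_step_embed[of Delta V E r N N' h V' E' r' F] assms(2-)
    by (simp add: rtranclp.rtrancl_into_rtrancl)
qed simp

definition join_labelling :: "(nat \<Rightarrow> 'q) \<Rightarrow> (nat \<Rightarrow> 'q) \<Rightarrow> nat \<Rightarrow> 'q" where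
  "join_labelling a b x = (if even x then a (x div 2) else b (x div 2))"

definition join_nodes :: "nat set \<Rightarrow> nat set \<Rightarrow> nat set" where
  "join_nodes V1 V2 = (\<lambda>v. 2 * v) ` V1 \<union> (\<lambda>v. 2 * v + 1) ` V2"

definition join_edges ::
  "(nat \<times> nat) set \<Rightarrow> (nat \<times> nat) set \<Rightarrow> nat \<Rightarrow> nat \<Rightarrow> (nat \<times> nat) set" where
  "join_edges E1 E2 r1 r2 =
     map_prod (\<lambda>v. 2 * v) (\<lambda>v. 2 * v) ` E1 \<union> map_prod (\<lambda>v. 2 * v + 1) (\<lambda>v. 2 * v + 1) ` E2 \<union>
     {(2 * r1, 2 * r2 + 1), (2 * r2 + 1, 2 * r1)}"

lemma join_labelling_even [simp]: "join_labelling a b (2 * v) = a v"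
  and join_labelling_odd [simp]: "join_labelling a b (Suc (2 * v)) = b v"
  by (simp_all add: join_labelling_def)

lemma join_labelling_frame_left:
  "x \<notin> range (\<lambda>v. 2 * v) \<Longrightarrow> join_labelling a b x = join_labelling a' b x"
  unfolding join_labelling_def by auto

lemma join_labelling_frame_right:
  "x \<notin> range (\<lambda>v. 2 * v + 1) \<Longrightarrow> join_labelling a b x = join_labelling a b' x"
  unfolding join_labelling_def by (metis odd_two_times_div_two_succ rangeI)

lemma graph_ok_join:
  assumes "graph_ok V1 E1" "graph_ok V2 E2" "r1 \<in> V1" "r2 \<in> V2"
  shows "graph_ok (join_nodes V1 V2) (join_edges E1 E2 r1 r2)"
  using assms unfolding graph_ok_def join_nodes_def join_edges_def sym_def by auto presburger+

lemma join_edges_even: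
  "v \<noteq> r1 \<Longrightarrow> (2 * v, x) \<in> join_edges E1 E2 r1 r2 \<longleftrightarrow> (\<exists>w. x = 2 * w \<and> (v, w) \<in> E1)"
  unfolding join_edges_def by auto presburger+

lemma join_edges_odd:
  "v \<noteq> r2 \<Longrightarrow> (Suc (2 * v), x) \<in> join_edges E1 E2 r1 r2 \<longleftrightarrow> (\<exists>w. x = Suc (2 * w) \<and> (v, w) \<in> E2)"
  unfolding join_edges_def by auto presburger+

lemma rooted_reachable_join:
  assumes "rooted_reachable I Delta V1 E1 r1 a" and "rooted_reachable I Delta V2 E2 r2 b"
  shows "rooted_reachable I Delta (join_nodes V1 V2) (join_edges E1 E2 r1 r2) (2 * r2 + 1)
           (join_labelling a b)"
proof -
  obtain a0 where g1: "graph_ok V1 E1" "r1 \<in> V1" and a0: "\<forall>v\<in>V1. a0 v \<in> I"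
    and run1: "(rooted_step Delta V1 E1 r1)\<^sup>*\<^sup>* a0 a"
    using assms(1) unfolding rooted_reachable_def by blast
  obtain b0 where g2: "graph_ok V2 E2" "r2 \<in> V2" and b0: "\<forall>v\<in>V2. b0 v \<in> I"
    and run2: "(rooted_step Delta V2 E2 r2)\<^sup>*\<^sup>* b0 b"
    using assms(2) unfolding rooted_reachable_def by blast
  let ?V = "join_nodes V1 V2" and ?E = "join_edges E1 E2 r1 r2" and ?r = "2 * r2 + 1"
  have "(rooted_step Delta ?V ?E ?r)\<^sup>*\<^sup>* (join_labelling a0 b0) (join_labelling a b0)"
    using run1 by (rule rooted_steps_embed[where h = "\<lambda>v. 2 * v" and F = "\<lambda>a. join_labelling a b0"])
      (auto simp: inj_def join_nodes_def join_edges_even join_labelling_frame_left, presburger)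
  also have "(rooted_step Delta ?V ?E ?r)\<^sup>*\<^sup>* (join_labelling a b0) (join_labelling a b)"
    using run2 by (rule rooted_steps_embed[where h = "\<lambda>v. 2 * v + 1" and F = "join_labelling a"])
      (auto simp: inj_def join_nodes_def join_edges_odd join_labelling_frame_right)
  finally have run: "(rooted_step Delta ?V ?E ?r)\<^sup>*\<^sup>* (join_labelling a0 b0) (join_labelling a b)" .
  have "\<forall>v\<in>?V. join_labelling a0 b0 v \<in> I"
    using a0 b0 by (auto simp: join_nodes_def)
  moreover have "?r \<in> ?V" using g2(2) by (simp add: join_nodes_def)
  ultimately show ?thesis
    using run graph_ok_join[OF g1(1) g2(1) g1(2) g2(2)] unfolding rooted_reachable_def by blast
qed

lemma rooted_step_broadcast:
  assumes "v \<in> V" "v \<noteq> r" "(v, r) \<in> E"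
    and bc: "(L v, Bcast m, q) \<in> Delta" and rc: "(L r, Recv m, q') \<in> Delta"
    and complete: "\<And>w. (v, w) \<in> E \<Longrightarrow> \<exists>p. (L w, Recv m, p) \<in> Delta"
  shows "\<exists>N. rooted_step Delta V E r L N \<and> N r = q'"
proof -
  define N where "N x = (if x = v then q else if x = r then q'
    else if (v, x) \<in> E then (SOME p. (L x, Recv m, p) \<in> Delta) else L x)" for x
  have "(L x, Recv m, N x) \<in> Delta" if "x \<noteq> v" "(v, x) \<in> E" for x
    using that rc someI_ex[OF complete[OF \<open>(v, x) \<in> E\<close>]] by (auto simp: N_def)
  then have "rooted_step Delta V E r L N"
    unfolding rooted_step_def using assms(1-3) bc by (intro bexI[of _ v] exI[of _ m]) (auto simp: N_def)
  moreover have "N r = q'" using assms(2) by (simp add: N_def)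
  ultimately show ?thesis by blast
qed

lemma rooted_reachable_step:
  "rooted_reachable I Delta V E r L \<Longrightarrow> rooted_step Delta V E r L N \<Longrightarrow>
   rooted_reachable I Delta V E r N"
  unfolding rooted_reachable_def by (meson rtranclp.rtrancl_into_rtrancl)

lemma rooted_reachable_reception:
  assumes protocol: "broadcast_protocol Q I M Delta"
    and reach1: "rooted_reachable I Delta V1 E1 r1 a" and reach2: "rooted_reachable I Delta V2 E2 r2 b"
    and bc: "(a r1, Bcast m, q2) \<in> Delta" and rc: "(b r2, Recv m, q2') \<in> Delta"
  shows "\<exists>V E r L. rooted_reachable I Delta V E r L \<and> L r = q2'"
proof -
  let ?V = "join_nodes V1 V2" and ?E = "join_edges E1 E2 r1 r2" and ?L = "join_labelling a b"
  have reach: "rooted_reachable I Delta ?V ?E (2 * r2 + 1) ?L"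
    using reach1 reach2 by (rule rooted_reachable_join)
  then have graph: "?E \<subseteq> ?V \<times> ?V"
    unfolding rooted_reachable_def graph_ok_def by blast
  have sat: "\<forall>v\<in>?V. ?L v \<in> saturation I Delta"
    using reach by (rule rooted_reachable_saturation)
  have "m \<in> M"
    using protocol bc unfolding broadcast_protocol_def by fastforce
  then have "\<exists>p. (?L w, Recv m, p) \<in> Delta" if "(2 * r1, w) \<in> ?E" for w
    using that graph sat saturation_subset[OF protocol] protocol
    unfolding broadcast_protocol_def by blast
  moreover have "2 * r1 \<in> ?V" "(2 * r1, 2 * r2 + 1) \<in> ?E" "2 * r1 \<noteq> 2 * r2 + 1"
    using reach1 unfolding rooted_reachable_def join_nodes_def join_edges_def by auto presburger
  ultimately obtain N where "rooted_step Delta ?V ?E (2 * r2 + 1) ?L N" "N (2 * r2 + 1) = q2'"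
    using rooted_step_broadcast[of "2 * r1" ?V "2 * r2 + 1" ?E ?L m q2 Delta q2'] bc rc by auto
  then show ?thesis using rooted_reachable_step[OF reach] by blast
qed

lemma saturation_rooted_reachable:
  assumes protocol: "broadcast_protocol Q I M Delta" and "q \<in> saturation I Delta"
  shows "\<exists>V E r L. rooted_reachable I Delta V E r L \<and> L r = q"
  using assms(2)
proof induction
  case (initial q)
  have "graph_ok {0} {}" unfolding graph_ok_def sym_def by simp
  then have "rooted_reachable I Delta {0} {} 0 (\<lambda>_. q)"
    using initial unfolding rooted_reachable_def by auto
  then show ?case by blast
next
  case (broadcast q1 m q2)
  then obtain V E r L where reach: "rooted_reachable I Delta V E r L" and "L r = q1" by blast
  then have "rooted_step Delta V E r L (L(r := q2))"
    using broadcast.hyps(2) unfolding rooted_reachable_def rooted_step_def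
    by (intro bexI[of _ r] exI[of _ m]) auto
  then have "rooted_reachable I Delta V E r (L(r := q2))"
    using reach by (rule rooted_reachable_step[rotated])
  then show ?case by fastforce
next
  case (reception q1 q1' m q2 q2')
  then show ?case using rooted_reachable_reception[OF protocol] by metis
qed

lemma saturation_coverable:
  "broadcast_protocol Q I M Delta \<Longrightarrow> q \<in> saturation I Delta \<Longrightarrow> coverable I Delta {q}"
  using saturation_rooted_reachable rooted_reachable_coverable by metis

theorem lemma3p4:
  fixes Q I :: "'q set" and M :: "'m set" and Delta :: "('q \<times> 'm action \<times> 'q) set"
  assumes "broadcast_protocol Q I M Delta"
    and "saturation_result I Delta S"
  shows "S = {q. coverable I Delta {q}} \<and>
         (\<forall>F. F \<subseteq> Q \<longrightarrow> (coverable I Delta F \<longleftrightarrow> F \<inter> S \<noteq> {}))"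
proof -
  have S: "S = saturation I Delta"
    using assms(2) by (rule saturation_result_eq)
  have single: "coverable I Delta {q} \<longleftrightarrow> q \<in> S" for q
    using coverable_saturation saturation_coverable[OF assms(1)] S by blast
  have "coverable I Delta F \<longleftrightarrow> F \<inter> S \<noteq> {}" for F
  proof
    assume "coverable I Delta F"
    then show "F \<inter> S \<noteq> {}" using S coverable_saturation by blast
  next
    assume "F \<inter> S \<noteq> {}"
    then obtain q where "q \<in> F" "coverable I Delta {q}" using single by blast
    then show "coverable I Delta F" using coverable_mono by blast
  qed
  with single show ?thesis by blast
qed

end
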